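(* Let $0<c_1\le c_2$ be constants, let $n$ be sufficiently large, let $t\in[1,n^{0.1}]$, and let $H$ be an undirected graph on $n$ vertices in which every vertex has degree between $c_1t$ and $c_2t$ and which has no cycle of length at most $8$. For all constants $a,b>0$ there is a constant $K$ (depending only on $a,b,c_1,c_2$) such that for every vertex set $C$ with $|C|\le at$, the number of distinct maximal cliques $D$ of $H^2$ with $|C\cap D|\ge bt$ is at most $K$.
   Context: $H^2$ (the square of $H$) is the graph on the vertex set of $H$ in which $u\neq v$ are adjacent if and only if there is a path of length exactly $2$ between $u$ and $v$ in $H$. A set $C$ is said to cover a maximal clique $D$ of $H^2$ if $|C\cap D|=\Omega(t)$. *)

theory Defs
  imports Complex_Main
begin

definition simple_graph :: "'a set \<Rightarrow> ('a \<Rightarrow> 'a \<Rightarrow> bool) \<Rightarrow> bool" where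
  "simple_graph V E \<longleftrightarrow> finite V \<and> (\<forall>u v. E u v \<longrightarrow> u \<in> V \<and> v \<in> V)
     \<and> (\<forall>u v. E u v \<longrightarrow> E v u) \<and> (\<forall>v. \<not> E v v)"

definition degree :: "'a set \<Rightarrow> ('a \<Rightarrow> 'a \<Rightarrow> bool) \<Rightarrow> 'a \<Rightarrow> nat" where
  "degree V E v = card {u \<in> V. E v u}"

definition has_cycle_of_length :: "'a set \<Rightarrow> ('a \<Rightarrow> 'a \<Rightarrow> bool) \<Rightarrow> nat \<Rightarrow> bool" where
  "has_cycle_of_length V E k \<longleftrightarrow> 3 \<le> k \<and> (\<exists>xs. length xs = k \<and> distinct xs \<and> set xs \<subseteq> V
      \<and> (\<forall>i<k. E (xs ! i) (xs ! ((i + 1) mod k))))"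

definition graph_square :: "('a \<Rightarrow> 'a \<Rightarrow> bool) \<Rightarrow> 'a \<Rightarrow> 'a \<Rightarrow> bool" where
  "graph_square E u v \<longleftrightarrow> u \<noteq> v \<and> (\<exists>w. E u w \<and> E w v)"

definition is_clique :: "'a set \<Rightarrow> ('a \<Rightarrow> 'a \<Rightarrow> bool) \<Rightarrow> 'a set \<Rightarrow> bool" where
  "is_clique V E D \<longleftrightarrow> D \<subseteq> V \<and> (\<forall>u\<in>D. \<forall>v\<in>D. u \<noteq> v \<longrightarrow> E u v)"

definition is_maximal_clique :: "'a set \<Rightarrow> ('a \<Rightarrow> 'a \<Rightarrow> bool) \<Rightarrow> 'a set \<Rightarrow> bool" where
  "is_maximal_clique V E D \<longleftrightarrow> is_clique V E D \<and>
     (\<forall>D'. is_clique V E D' \<and> D \<subseteq> D' \<longrightarrow> D' = D)"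

end

theory Submission
  imports Defs
begin

(* As H has no cycles of length 3, 4 or 6, a maximal clique of H^2 containing two vertices x, y
   is the neighbourhood N(w) of a common neighbour w of x and y; every other maximal clique is a
   singleton, and singletons meet C in at least bt vertices only if bt <= 1, so there are at most
   |C| <= a/b of them. Distinct neighbourhoods share at most one vertex, so M neighbourhoods that
   each meet C in at least bt vertices cover at least Mbt - M(M-1)/2 vertices of C; choosing
   Mb >= a + 1 this forces t <= M(M-1)/2. Hence for t > M^2 fewer than M neighbourhoods are
   covered, while for t <= M^2 each centre w of a covered neighbourhood is adjacent to C, so there
   are at most |C| c2 t <= a c2 M^4 of them. *)

definition neighbours :: "'a set \<Rightarrow> ('a \<Rightarrow> 'a \<Rightarrow> bool) \<Rightarrow> 'a \<Rightarrow> 'a set" where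
  "neighbours V E w = {u \<in> V. E w u}"

lemma has_cycle_of_lengthI:
  assumes "3 \<le> length xs" "distinct xs" "set xs \<subseteq> V" "successively E (xs @ [hd xs])"
  shows "has_cycle_of_length V E (length xs)"
  unfolding has_cycle_of_length_def
proof (intro conjI exI[of _ xs] allI impI)
  fix i assume i: "i < length xs"
  have hd: "hd xs = xs ! 0" using assms(1) by (cases xs) auto
  have "E ((xs @ [hd xs]) ! i) ((xs @ [hd xs]) ! Suc i)"
    using successively_nth[OF assms(4)] i by simp
  then show "E (xs ! i) (xs ! ((i + 1) mod length xs))"
    using i assms(1) by (cases "Suc i = length xs") (auto simp: nth_append hd)
qed (use assms in auto)

lemma not_successively_if_no_short_cycles:
  assumes "\<forall>k\<le>m. \<not> has_cycle_of_length V E k"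
    and "3 \<le> length xs" "length xs \<le> m" "distinct xs" "set xs \<subseteq> V"
  shows "\<not> successively E (xs @ [hd xs])"
  using assms has_cycle_of_lengthI by blast

lemma clique_square_neighbours:
  assumes "simple_graph V E"
  shows "is_clique V (graph_square E) (neighbours V E w)"
  using assms unfolding is_clique_def neighbours_def graph_square_def simple_graph_def by blast

lemma card_neighbours_Int_le_1:
  assumes "simple_graph V E" "\<not> has_cycle_of_length V E 4" "v \<noteq> w"
  shows "card (neighbours V E v \<inter> neighbours V E w) \<le> 1"
proof -
  have "finite (neighbours V E v \<inter> neighbours V E w)"
    using assms(1) by (simp add: simple_graph_def neighbours_def)
  moreover have "u1 = u2"
    if "u1 \<in> neighbours V E v \<inter> neighbours V E w" "u2 \<in> neighbours V E v \<inter> neighbours V E w" for u1 u2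
  proof (rule ccontr)
    assume "u1 \<noteq> u2"
    with that assms(1,3) have "has_cycle_of_length V E (length [v, u1, w, u2])"
      by (intro has_cycle_of_lengthI) (auto simp: simple_graph_def neighbours_def)
    with assms(2) show False by (simp add: eval_nat_numeral)
  qed
  ultimately show ?thesis by (simp add: card_le_Suc0_iff_eq)
qed

lemma maximal_clique_square_cases:
  assumes graph: "simple_graph V E" and short: "\<forall>k\<le>6. \<not> has_cycle_of_length V E k"
    and D: "is_maximal_clique V (graph_square E) D" and "x \<in> D"
  shows "D = {x} \<or> (\<exists>w\<in>V. D = neighbours V E w)"
proof (cases "D = {x}")
  case False
  then obtain y where "y \<in> D" "y \<noteq> x" using \<open>x \<in> D\<close> by blast
  have edge: "E v u \<and> u \<noteq> v \<and> u \<in> V \<and> v \<in> V" if "E u v" for u v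
    using graph that unfolding simple_graph_def by blast
  have no_cycle: "\<not> successively E (xs @ [hd xs])"
    if "3 \<le> length xs" "length xs \<le> 6" "distinct xs" "set xs \<subseteq> V" for xs
    using not_successively_if_no_short_cycles[OF short that] .
  have clique: "is_clique V (graph_square E) D"
    using D unfolding is_maximal_clique_def by blast
  have common: "\<exists>m. E u m \<and> E m v" if "u \<in> D" "v \<in> D" "u \<noteq> v" for u v
    using clique that unfolding is_clique_def graph_square_def by blast
  obtain w where xw: "E x w" and wy: "E w y"
    using common \<open>x \<in> D\<close> \<open>y \<in> D\<close> \<open>y \<noteq> x\<close> by metis
  have "E w z" if "z \<in> D" for z
    \<comment> \<open>otherwise paths x-p-z and y-q-z close, with x-w-y, a cycle of length 3, 4 or 6\<close>
  proof (rule ccontr)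
    assume "\<not> E w z"
    then have "z \<noteq> x" "z \<noteq> y" using edge[OF xw] wy by auto
    then obtain p q where xp: "E x p" and pz: "E p z" and yq: "E y q" and qz: "E q z"
      using common \<open>x \<in> D\<close> \<open>y \<in> D\<close> \<open>z \<in> D\<close> by metis
    note edges = xw wy xp pz yq qz edge[OF xw] edge[OF wy] edge[OF xp] edge[OF pz] edge[OF yq] edge[OF qz]
    have "p \<noteq> w" "q \<noteq> w" using pz qz \<open>\<not> E w z\<close> by auto
    have "w \<noteq> z" using no_cycle[of "[x, p, z]"] edges \<open>z \<noteq> x\<close> by auto
    have "p \<noteq> y" "q \<noteq> x" using no_cycle[of "[x, w, y]"] edges \<open>y \<noteq> x\<close> by auto
    have "p \<noteq> q"
      using no_cycle[of "[x, w, y, p]"] edges \<open>y \<noteq> x\<close> \<open>p \<noteq> y\<close> \<open>p \<noteq> w\<close> by auto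
    then show False
      using no_cycle[of "[x, w, y, q, z, p]"] edges \<open>y \<noteq> x\<close> \<open>z \<noteq> x\<close> \<open>z \<noteq> y\<close> \<open>p \<noteq> y\<close>
        \<open>q \<noteq> x\<close> \<open>p \<noteq> w\<close> \<open>q \<noteq> w\<close> \<open>w \<noteq> z\<close>
      by auto
  qed
  then have "D \<subseteq> neighbours V E w"
    using clique unfolding is_clique_def neighbours_def by blast
  then have "D = neighbours V E w"
    using D clique_square_neighbours[OF graph] unfolding is_maximal_clique_def by blast
  then show ?thesis using edge[OF xw] by blast
qed simp

lemma card_UN_ge_pairwise_Int_le_1:
  fixes A :: "'b \<Rightarrow> 'a set" and s :: real
  assumes "finite S" "\<And>w. w \<in> S \<Longrightarrow> finite (A w)" "\<And>w. w \<in> S \<Longrightarrow> s \<le> real (card (A w))"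
    and "\<And>v w. v \<in> S \<Longrightarrow> w \<in> S \<Longrightarrow> v \<noteq> w \<Longrightarrow> card (A v \<inter> A w) \<le> 1"
  shows "real (card S) * s - real (card S) * (real (card S) - 1) / 2 \<le> real (card (\<Union>(A ` S)))"
  using assms
proof (induction S rule: finite_induct)
  case (insert w S)
  let ?U = "\<Union>(A ` S)" and ?n = "real (card S)"
  have "card (A w \<inter> ?U) \<le> (\<Sum>v\<in>S. card (A w \<inter> A v))"
    unfolding Int_UN_distrib by (rule card_UN_le[OF insert.hyps(1)])
  also have "\<dots> \<le> (\<Sum>v\<in>S. 1)"
    using insert.hyps(2) insert.prems(3) by (intro sum_mono) auto
  finally have "card (A w \<inter> ?U) \<le> card S" by simp
  moreover have "card (A w \<union> ?U) + card (A w \<inter> ?U) = card (A w) + card ?U"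
    using insert by (intro card_Un_Int[symmetric]) auto
  ultimately have "real (card (A w)) + real (card ?U) - ?n \<le> real (card (A w \<union> ?U))"
    by linarith
  moreover have "?n * s - ?n * (?n - 1) / 2 \<le> real (card ?U)" and "s \<le> real (card (A w))"
    using insert by auto
  moreover have "(1 + ?n) * s - (1 + ?n) * ?n / 2 = s + (?n * s - ?n * (?n - 1) / 2) - ?n"
    by (simp add: field_simps)
  ultimately show ?case
    using insert.hyps by simp
qed simp

definition covered_centres :: "'a set \<Rightarrow> ('a \<Rightarrow> 'a \<Rightarrow> bool) \<Rightarrow> 'a set \<Rightarrow> real \<Rightarrow> 'a set" where
  "covered_centres V E C s = {w \<in> V. s \<le> real (card (C \<inter> neighbours V E w))}"

lemma card_covered_centres_le_sum_degree:
  assumes graph: "simple_graph V E" and "C \<subseteq> V" "0 < s"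
  shows "card (covered_centres V E C s) \<le> (\<Sum>c\<in>C. degree V E c)"
proof -
  have fin: "finite V" and sym: "\<And>u v. E u v \<Longrightarrow> E v u"
    using graph unfolding simple_graph_def by blast+
  have "covered_centres V E C s \<subseteq> (\<Union>c\<in>C. neighbours V E c)"
  proof
    fix w assume w: "w \<in> covered_centres V E C s"
    then have "C \<inter> neighbours V E w \<noteq> {}"
      using \<open>0 < s\<close> unfolding covered_centres_def by auto
    then show "w \<in> (\<Union>c\<in>C. neighbours V E c)"
      using w sym unfolding covered_centres_def neighbours_def by auto
  qed
  then have "card (covered_centres V E C s) \<le> card (\<Union>c\<in>C. neighbours V E c)"
    by (intro card_mono finite_subset[OF _ fin]) (auto simp: neighbours_def)
  also have "\<dots> \<le> (\<Sum>c\<in>C. card (neighbours V E c))"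
    using fin \<open>C \<subseteq> V\<close> by (intro card_UN_le) (rule finite_subset)
  finally show ?thesis by (simp add: neighbours_def degree_def)
qed

lemma card_covered_centres_less:
  assumes graph: "simple_graph V E" and "\<not> has_cycle_of_length V E 4"
    and "C \<subseteq> V" "real (card C) \<le> a * t" "a + 1 \<le> real M * b" "0 \<le> t"
    and "real M * (real M - 1) / 2 < t"
  shows "card (covered_centres V E C (b * t)) < M"
proof (rule ccontr)
  assume "\<not> ?thesis"
  then obtain S where S: "S \<subseteq> covered_centres V E C (b * t)" "card S = M"
    by (meson not_less obtain_subset_with_card_n)
  have finV: "finite V" using graph unfolding simple_graph_def by blast
  have "S \<subseteq> V" using S(1) unfolding covered_centres_def by blast
  then have "finite S" "finite C" using \<open>C \<subseteq> V\<close> finV by (auto intro: finite_subset)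
  have "card ((C \<inter> neighbours V E v) \<inter> (C \<inter> neighbours V E w)) \<le> 1" if "v \<noteq> w" for v w
  proof -
    have "card ((C \<inter> neighbours V E v) \<inter> (C \<inter> neighbours V E w))
        \<le> card (neighbours V E v \<inter> neighbours V E w)"
      using finV by (intro card_mono) (auto simp: neighbours_def)
    then show ?thesis
      using card_neighbours_Int_le_1[OF graph \<open>\<not> has_cycle_of_length V E 4\<close> that] by linarith
  qed
  then have "real (card S) * (b * t) - real (card S) * (real (card S) - 1) / 2
      \<le> real (card (\<Union>w\<in>S. C \<inter> neighbours V E w))"
    using S(1) \<open>finite S\<close> \<open>finite C\<close> unfolding covered_centres_def
    by (intro card_UN_ge_pairwise_Int_le_1) auto
  also have "\<dots> \<le> real (card C)"
    using \<open>finite C\<close> by (simp add: card_mono)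
  finally have "real M * b * t - real M * (real M - 1) / 2 \<le> a * t"
    using S(2) \<open>real (card C) \<le> a * t\<close> by (simp add: algebra_simps)
  moreover have "(a + 1) * t \<le> real M * b * t"
    using \<open>a + 1 \<le> real M * b\<close> \<open>0 \<le> t\<close> by (rule mult_right_mono)
  ultimately show False
    using \<open>real M * (real M - 1) / 2 < t\<close> by (simp add: distrib_right)
qed

lemma card_covered_centres_le:
  assumes graph: "simple_graph V E" and "\<not> has_cycle_of_length V E 4"
    and deg: "\<forall>v\<in>V. real (degree V E v) \<le> c2 * t"
    and "C \<subseteq> V" "real (card C) \<le> a * t" "a + 1 \<le> real M * b"
    and "0 < t" "0 < b" "0 \<le> a" "0 \<le> c2"
  shows "real (card (covered_centres V E C (b * t))) \<le> real M + a * c2 * real M ^ 4"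
proof (cases "t \<le> real M ^ 2")
  case True
  have "real (card (covered_centres V E C (b * t))) \<le> (\<Sum>c\<in>C. real (degree V E c))"
    using card_covered_centres_le_sum_degree[OF graph \<open>C \<subseteq> V\<close>, of "b * t"] \<open>0 < t\<close> \<open>0 < b\<close>
    by (metis mult_pos_pos of_nat_le_iff of_nat_sum)
  also have "\<dots> \<le> real (card C) * (c2 * t)"
    using deg \<open>C \<subseteq> V\<close> sum_bounded_above[of C "\<lambda>c. real (degree V E c)" "c2 * t"] by auto
  also have "\<dots> \<le> (a * t) * (c2 * t)"
    using \<open>real (card C) \<le> a * t\<close> \<open>0 < t\<close> \<open>0 \<le> c2\<close> by (simp add: mult_right_mono)
  also have "\<dots> = a * c2 * t ^ 2" by (simp add: power2_eq_square)
  also have "\<dots> \<le> a * c2 * (real M ^ 2) ^ 2"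
    using True \<open>0 < t\<close> \<open>0 \<le> a\<close> \<open>0 \<le> c2\<close> by (intro mult_left_mono power_mono) auto
  finally show ?thesis by simp
next
  case False
  have "real M * (real M - 1) / 2 \<le> real M ^ 2" by (simp add: power2_eq_square field_simps)
  then have "card (covered_centres V E C (b * t)) < M"
    using False assms by (intro card_covered_centres_less) auto
  moreover have "0 \<le> a * c2 * real M ^ 4" using \<open>0 \<le> a\<close> \<open>0 \<le> c2\<close> by simp
  ultimately show ?thesis by linarith
qed

lemma maximal_square_cliques_covered_subset:
  assumes graph: "simple_graph V E" and short: "\<forall>k\<le>6. \<not> has_cycle_of_length V E k"
    and "0 < s"
  shows "{D. is_maximal_clique V (graph_square E) D \<and> s \<le> real (card (C \<inter> D))}
    \<subseteq> (\<lambda>x. {x}) ` {x \<in> C. s \<le> 1} \<union> neighbours V E ` covered_centres V E C s"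
proof
  fix D assume "D \<in> {D. is_maximal_clique V (graph_square E) D \<and> s \<le> real (card (C \<inter> D))}"
  then have D: "is_maximal_clique V (graph_square E) D" and s: "s \<le> real (card (C \<inter> D))"
    by auto
  have "card (C \<inter> D) \<noteq> 0" using s \<open>0 < s\<close> by linarith
  then obtain x where "x \<in> C" "x \<in> D" by (metis card.empty disjoint_iff)
  from maximal_clique_square_cases[OF graph short D \<open>x \<in> D\<close>]
  show "D \<in> (\<lambda>x. {x}) ` {x \<in> C. s \<le> 1} \<union> neighbours V E ` covered_centres V E C s"
  proof (elim disjE bexE)
    assume "D = {x}"
    then show ?thesis using s \<open>x \<in> C\<close> by (auto simp: card_le_Suc0_iff_eq)
  next
    fix w assume "w \<in> V" "D = neighbours V E w"
    then show ?thesis using s unfolding covered_centres_def by auto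
  qed
qed

lemma card_maximal_square_cliques_covered_le:
  assumes graph: "simple_graph V E" and short: "\<forall>k\<le>6. \<not> has_cycle_of_length V E k"
    and deg: "\<forall>v\<in>V. real (degree V E v) \<le> c2 * t"
    and "C \<subseteq> V" "real (card C) \<le> a * t" "a + 1 \<le> real M * b"
    and "1 \<le> t" "0 < b" "0 \<le> a" "0 \<le> c2"
  shows "real (card {D. is_maximal_clique V (graph_square E) D \<and> b * t \<le> real (card (C \<inter> D))})
    \<le> a / b + real M + a * c2 * real M ^ 4"
proof -
  let ?S = "{x \<in> C. b * t \<le> 1}" and ?W = "covered_centres V E C (b * t)"
  have "finite V" using graph unfolding simple_graph_def by blast
  moreover have "?W \<subseteq> V" unfolding covered_centres_def by blast
  ultimately have fin: "finite C" "finite ?W" using \<open>C \<subseteq> V\<close> by (auto intro: finite_subset)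
  have "card {D. is_maximal_clique V (graph_square E) D \<and> b * t \<le> real (card (C \<inter> D))}
      \<le> card ((\<lambda>x. {x}) ` ?S \<union> neighbours V E ` ?W)"
    using maximal_square_cliques_covered_subset[OF graph short, of "b * t" C] \<open>1 \<le> t\<close> \<open>0 < b\<close> fin
    by (intro card_mono) auto
  also have "\<dots> \<le> card ((\<lambda>x. {x}) ` ?S) + card (neighbours V E ` ?W)"
    by (rule card_Un_le)
  also have "\<dots> \<le> card ?S + card ?W"
    by (intro add_mono card_image_le) (use fin in auto)
  finally have "real (card {D. is_maximal_clique V (graph_square E) D \<and> b * t \<le> real (card (C \<inter> D))})
      \<le> real (card ?S) + real (card ?W)" by linarith
  moreover have "real (card ?S) \<le> a / b"
  proof (cases "b * t \<le> 1")
    case True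
    then have "a * t \<le> a / b"
      using \<open>0 < b\<close> mult_left_le[OF True \<open>0 \<le> a\<close>] by (simp add: field_simps)
    with True show ?thesis using \<open>real (card C) \<le> a * t\<close> by simp
  qed (use \<open>0 < b\<close> \<open>0 \<le> a\<close> in simp)
  moreover have "real (card ?W) \<le> real M + a * c2 * real M ^ 4"
    using short assms by (intro card_covered_centres_le) auto
  ultimately show ?thesis by linarith
qed

theorem lemmaA7:
  fixes c1 c2 a b :: real
  assumes "0 < c1" "c1 \<le> c2" "0 < a" "0 < b"
  shows "\<exists>K::real. \<exists>N::nat. \<forall>n \<ge> N. \<forall>(t::real) (V::nat set) (E::nat \<Rightarrow> nat \<Rightarrow> bool) (C::nat set).
      1 \<le> t \<and> t \<le> real n powr 0.1 \<and>
      simple_graph V E \<and> card V = n \<and>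
      (\<forall>v\<in>V. c1 * t \<le> real (degree V E v) \<and> real (degree V E v) \<le> c2 * t) \<and>
      (\<forall>k\<le>8. \<not> has_cycle_of_length V E k) \<and>
      C \<subseteq> V \<and> real (card C) \<le> a * t
      \<longrightarrow> real (card {D. is_maximal_clique V (graph_square E) D \<and> b * t \<le> real (card (C \<inter> D))}) \<le> K"
proof -
  define M where "M = nat \<lceil>(a + 1) / b\<rceil>"
  have "(a + 1) / b \<le> real M" unfolding M_def by linarith
  then have "a + 1 \<le> real M * b" using \<open>0 < b\<close> by (simp add: field_simps)
  moreover have "0 \<le> c2" using assms by linarith
  ultimately show ?thesis
    using assms
    by (intro exI[of _ "a / b + real M + a * c2 * real M ^ 4"] exI[of _ 0] allI impI)
      (elim conjE, rule card_maximal_square_cliques_covered_le, auto)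
qed

end
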